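(* For each $m\ge1$, the sequence $(v_{k;m})_{k\ge0}$ is bounded above by $b=v_{k;0}$, is strictly decreasing in $k$, and converges to $b/(m+1)$ as $k\to\infty$.
   Context: Fix $b\ge2$ and $d\in\{0,\dots,b-1\}$. A string is a finite sequence $X=(d_l,\dots,d_1)$ of digits in $\{0,\dots,b-1\}$ (leading zeros allowed), of length $|X|=l\ge0$; its value is $n(X)=\sum_{i=1}^{l}d_ib^{i-1}$ ($0$ for the empty string). For $k\ge0$, $\mu_k=\sum_{X}b^{-|X|}\delta_{n(X)/b^{|X|}}$, the sum over all strings $X$ containing $d$ exactly $k$ times; it is a finite measure on $[0,1)$ of total mass $b$. The complementary moments are $v_{k;m}=\int_{[0,1)}(1-x)^m\,d\mu_k(x)$. *)

theory Defs
  imports "HOL-Probability.Probability"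
begin

text \<open>Strings over the digit alphabet {0,...,b-1}, written as lists (d_l, ..., d_1),
  most significant digit first; leading zeros allowed.\<close>

definition digit_strings :: "nat \<Rightarrow> nat list set" where
  "digit_strings b = {X. set X \<subseteq> {..<b}}"

definition str_value :: "nat \<Rightarrow> nat list \<Rightarrow> nat" where
  "str_value b X = foldl (\<lambda>acc x. acc * b + x) 0 X"

definition occ :: "nat \<Rightarrow> nat list \<Rightarrow> nat" where
  "occ d X = length (filter (\<lambda>x. x = d) X)"

text \<open>mu_k = sum over strings X containing d exactly k times of b^(-|X|) times the
  Dirac mass at n(X)/b^|X|: the push-forward along X |-> n(X)/b^|X| of the weighted
  counting measure on such strings, as a measure on the Borel sets of the reals.\<close>
definition mu :: "nat \<Rightarrow> nat \<Rightarrow> nat \<Rightarrow> real measure" where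
  "mu b d k = distr
     (density (count_space UNIV)
        (\<lambda>X::nat list. if X \<in> digit_strings b \<and> occ d X = k
                       then ennreal (1 / real b ^ length X) else 0))
     borel (\<lambda>X. real (str_value b X) / real b ^ length X)"

definition v :: "nat \<Rightarrow> nat \<Rightarrow> nat \<Rightarrow> nat \<Rightarrow> real" where
  "v b d k m = (LINT x:{0..<1}|mu b d k. (1 - x) ^ m)"

end

theory Submission
  imports Defs
begin

text \<open>Removing the leading digit \<open>c\<close> of a string \<open>c # X\<close> relates the points by
  \<open>1 - x(c # X) = ((b - 1 - c) + (1 - x(X))) / b\<close>. Expanding the \<open>m\<close>-th power binomially turns
  \<open>v(k, m) = \<Sum>\<^sub>X b^-|X| (1 - x(X))^m\<close> into the linear recursion
  \<open>(b^(m+1) - b + 1) v(k, m) = [k = 0] b^(m+1) + v(k-1, m) + L(k, m)\<close>,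
  where \<open>L(k, m)\<close> is a combination with nonnegative coefficients of the lower moments \<open>v(k, j)\<close>,
  \<open>v(k-1, j)\<close>, \<open>j < m\<close>. For \<open>m = 0\<close> it gives \<open>v(k, 0) = b\<close>. Strict decrease in \<open>k\<close> follows by
  induction on \<open>m\<close> and then on \<open>k\<close>, and letting \<open>k \<rightarrow> \<infinity>\<close> in the recursion, with the lower
  moments already tending to \<open>b / (j + 1)\<close>, forces the limit \<open>b / (m + 1)\<close>.\<close>

lemma foldl_digits_shift:
  "foldl (\<lambda>acc x. acc * b + x) a X = a * b ^ length X + foldl (\<lambda>acc x. acc * b + x) (0::nat) X"
proof (induction X arbitrary: a)
  case (Cons x X)
  show ?case
    by (simp only: foldl_Cons, subst Cons.IH, subst (2) Cons.IH) (simp add: algebra_simps)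
qed simp

lemma str_value_Cons: "str_value b (c # X) = c * b ^ length X + str_value b X"
  unfolding str_value_def by (simp only: foldl_Cons, subst foldl_digits_shift) simp

lemma str_value_less_power: "set X \<subseteq> {..<b} \<Longrightarrow> str_value b X < b ^ length X"
proof (induction X)
  case Nil
  then show ?case by (simp add: str_value_def)
next
  case (Cons c X)
  then have "c < b" and "str_value b X < b ^ length X" by auto
  then have "c * b ^ length X + str_value b X < (c + 1) * b ^ length X" by simp
  also have "\<dots> \<le> b * b ^ length X" using \<open>c < b\<close> by (intro mult_right_mono) auto
  finally show ?case by (simp add: str_value_Cons)
qed

definition strings_of_length :: "nat \<Rightarrow> nat \<Rightarrow> nat list set" where
  "strings_of_length b l = {X. set X \<subseteq> {..<b} \<and> length X = l}"

lemma finite_strings_of_length: "finite (strings_of_length b l)"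
  unfolding strings_of_length_def using finite_lists_length_eq[of "{..<b}" l] by simp

lemma strings_of_length_0: "strings_of_length b 0 = {[]}"
  by (auto simp: strings_of_length_def)

lemma strings_of_length_Suc:
  "strings_of_length b (Suc l) = (\<lambda>(c, X). c # X) ` ({..<b} \<times> strings_of_length b l)"
  by (auto simp: strings_of_length_def image_iff length_Suc_conv)

definition str_point :: "nat \<Rightarrow> nat list \<Rightarrow> real" where
  "str_point b X = real (str_value b X) / real b ^ length X"

lemma str_point_nonneg: "0 \<le> str_point b X"
  by (simp add: str_point_def)

lemma str_point_less_1:
  assumes "set X \<subseteq> {..<b}"
  shows "str_point b X < 1"
proof -
  have "real (str_value b X) < real b ^ length X"
    using str_value_less_power[OF assms] by (metis of_nat_less_iff of_nat_power)
  then show ?thesis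
    unfolding str_point_def by (simp add: divide_less_eq)
qed

lemma power_one_minus_str_point_le_1:
  assumes "set X \<subseteq> {..<b}"
  shows "(1 - str_point b X) ^ m \<le> 1"
  using str_point_nonneg str_point_less_1[OF assms] by (intro power_le_one) auto

lemma power_one_minus_str_point_less_1:
  assumes "set X \<subseteq> {..<b}" and "0 < str_point b X" and "0 < m"
  shows "(1 - str_point b X) ^ m < 1"
  using assms str_point_less_1[OF assms(1)] by (subst power_less_one_iff) auto

lemma one_minus_str_point_Cons:
  assumes "0 < b"
  shows "1 - str_point b (c # X) = (real b - 1 - real c + (1 - str_point b X)) / real b"
  using assms unfolding str_point_def str_value_Cons by (simp add: field_simps)

lemma nn_integral_count_space_lists_by_length:
  "(\<integral>\<^sup>+X. f X \<partial>count_space UNIV) = (\<Sum>l. \<integral>\<^sup>+X. f X \<partial>count_space {X :: 'a list. length X = l})"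
proof -
  have "f X = (\<Sum>l. f X * indicator {X. length X = l} X)" for X
  proof -
    have "(\<lambda>l. f X * indicator {X. length X = l} X) = (\<lambda>l. if l = length X then f X else 0)"
      by (auto simp: indicator_def)
    then show ?thesis
      using sums_unique[OF sums_single[of "length X" "\<lambda>_. f X"]] by simp
  qed
  then have "(\<integral>\<^sup>+X. f X \<partial>count_space UNIV)
      = (\<integral>\<^sup>+X. (\<Sum>l. f X * indicator {X. length X = l} X) \<partial>count_space UNIV)"
    by simp
  also have "\<dots> = (\<Sum>l. \<integral>\<^sup>+X. f X * indicator {X. length X = l} X \<partial>count_space UNIV)"
    by (rule nn_integral_suminf) simp
  finally show ?thesis
    by (simp add: nn_integral_count_space_indicator)
qed

lemma summable_of_contracting_recurrence:
  fixes s t :: "nat \<Rightarrow> real"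
  assumes s_nonneg: "\<And>l. 0 \<le> s l" and t_nonneg: "\<And>l. 0 \<le> t l" and "r < 1"
    and rec: "\<And>l. s (Suc l) \<le> r * s l + t l" and "summable t"
  shows "summable s"
proof (rule summableI_nonneg_bounded[OF s_nonneg])
  fix n
  have "(\<Sum>l<Suc n. s l) = s 0 + (\<Sum>l<n. s (Suc l))"
    by (rule sum.lessThan_Suc_shift)
  also have "(\<Sum>l<n. s (Suc l)) \<le> (\<Sum>l<n. r * s l + t l)"
    by (intro sum_mono rec)
  also have "\<dots> = r * (\<Sum>l<n. s l) + (\<Sum>l<n. t l)"
    by (simp add: sum.distrib sum_distrib_left)
  also have "(\<Sum>l<n. t l) \<le> suminf t"
    using sum_le_suminf[OF \<open>summable t\<close>] t_nonneg by auto
  finally have "(\<Sum>l<Suc n. s l) \<le> s 0 + r * (\<Sum>l<n. s l) + suminf t"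
    by simp
  moreover have "(\<Sum>l<n. s l) \<le> (\<Sum>l<Suc n. s l)"
    using s_nonneg[of n] by simp
  ultimately have "(1 - r) * (\<Sum>l<n. s l) \<le> s 0 + suminf t"
    by (simp add: algebra_simps)
  with \<open>r < 1\<close> show "(\<Sum>l<n. s l) \<le> (s 0 + suminf t) / (1 - r)"
    by (simp add: field_simps)
qed

lemma sum_binomial_div_Suc:
  "(\<Sum>j\<le>m. real (m choose j) * x ^ (m - j) / (real j + 1))
     = ((x + 1) ^ (m + 1) - x ^ (m + 1)) / (real m + 1)"
proof -
  have absorb: "real (m choose j) / (real j + 1) = real (Suc m choose Suc j) / (real m + 1)" for j
  proof -
    have "real (Suc j) * real (Suc m choose Suc j) = real (Suc m) * real (m choose j)"
      using Suc_times_binomial[of j m] by (metis of_nat_mult)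
    then show ?thesis by (simp add: field_simps del: binomial_Suc_Suc)
  qed
  have "(1 + x) ^ Suc m = real (Suc m choose 0) * 1 ^ 0 * x ^ (Suc m - 0)
      + (\<Sum>j\<le>m. real (Suc m choose Suc j) * 1 ^ Suc j * x ^ (Suc m - Suc j))"
    using binomial_ring[of 1 x "Suc m"] by (simp only: sum.atMost_Suc_shift)
  then have "(\<Sum>j\<le>m. real (Suc m choose Suc j) * x ^ (m - j)) = (x + 1) ^ (m + 1) - x ^ (m + 1)"
    by (simp del: binomial_Suc_Suc power_Suc add: add.commute)
  moreover have "(\<Sum>j\<le>m. real (m choose j) * x ^ (m - j) / (real j + 1))
      = (\<Sum>j\<le>m. real (Suc m choose Suc j) * x ^ (m - j)) / (real m + 1)"
    unfolding sum_divide_distrib by (intro sum.cong refl) (metis absorb times_divide_eq_left mult.commute)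
  ultimately show ?thesis by simp
qed

section \<open>The moments as series over string lengths\<close>

locale digit_moments =
  fixes b d :: nat
  assumes two_le_base: "2 \<le> b" and digit_less_base: "d < b"
begin

lemma base_pos: "0 < b"
  using two_le_base by simp

definition layer :: "nat \<Rightarrow> nat \<Rightarrow> nat \<Rightarrow> real" where
  "layer k l m = (\<Sum>X\<in>strings_of_length b l.
     if occ d X = k then (1 - str_point b X) ^ m / real b ^ l else 0)"

lemma layer_nonneg: "0 \<le> layer k l m"
  unfolding layer_def
  by (intro sum_nonneg) (auto simp: strings_of_length_def dest: str_point_less_1)

lemma layer_le_layer_0: "layer k l m \<le> layer k l 0"
  unfolding layer_def
  by (intro sum_mono) (auto simp: strings_of_length_def divide_right_mono power_one_minus_str_point_le_1)

lemma layer_less_layer_0: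
  assumes "X \<in> strings_of_length b l" "occ d X = k" "0 < str_point b X" "1 \<le> m"
  shows "layer k l m < layer k l 0"
  unfolding layer_def
proof (rule sum_strict_mono_ex1[OF finite_strings_of_length])
  show "\<forall>Y\<in>strings_of_length b l. (if occ d Y = k then (1 - str_point b Y) ^ m / real b ^ l else 0)
      \<le> (if occ d Y = k then (1 - str_point b Y) ^ 0 / real b ^ l else 0)"
    by (auto simp: strings_of_length_def divide_right_mono power_one_minus_str_point_le_1)
  show "\<exists>Y\<in>strings_of_length b l. (if occ d Y = k then (1 - str_point b Y) ^ m / real b ^ l else 0)
      < (if occ d Y = k then (1 - str_point b Y) ^ 0 / real b ^ l else 0)"
    using assms base_pos
    by (intro bexI[of _ X]) (auto simp: strings_of_length_def divide_strict_right_mono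
        power_one_minus_str_point_less_1)
qed

lemma layer_0: "layer k 0 m = (if k = 0 then 1 else 0)"
  by (simp add: layer_def strings_of_length_0 occ_def str_point_def str_value_def)

text \<open>\<open>on_tail f c k\<close> is \<open>f\<close> at the number of occurrences of \<open>d\<close> in \<open>X\<close>, when \<open>c # X\<close> contains \<open>d\<close>
  exactly \<open>k\<close> times; it is \<open>0\<close> when no such \<open>X\<close> exists.\<close>

definition on_tail :: "(nat \<Rightarrow> real) \<Rightarrow> nat \<Rightarrow> nat \<Rightarrow> real" where
  "on_tail f c k = (if c = d then (case k of 0 \<Rightarrow> 0 | Suc k' \<Rightarrow> f k') else f k)"

lemma sum_occ_Cons:
  "(\<Sum>X\<in>A. if occ d (c # X) = k then g X else 0) = on_tail (\<lambda>k. \<Sum>X\<in>A. if occ d X = k then g X else 0) c k"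
  by (cases k) (auto simp: on_tail_def occ_def intro!: sum.cong)

lemma sum_on_tail:
  "(\<Sum>c<b. on_tail f c k) = (real b - 1) * f k + (case k of 0 \<Rightarrow> 0 | Suc k' \<Rightarrow> f k')"
proof -
  have "(\<Sum>c<b. on_tail f c k) = on_tail f d k + (\<Sum>c\<in>{..<b} - {d}. on_tail f c k)"
    using digit_less_base by (subst sum.remove[of _ d]) auto
  also have "(\<Sum>c\<in>{..<b} - {d}. on_tail f c k) = (\<Sum>c\<in>{..<b} - {d}. f k)"
    by (rule sum.cong) (auto simp: on_tail_def)
  finally show ?thesis
    using digit_less_base by (simp add: on_tail_def of_nat_diff)
qed

definition expansion_coeff :: "nat \<Rightarrow> nat \<Rightarrow> nat \<Rightarrow> real" where
  "expansion_coeff m c j = real (m choose j) * (real b - 1 - real c) ^ (m - j)"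

lemma expansion_coeff_nonneg: "c < b \<Longrightarrow> 0 \<le> expansion_coeff m c j"
  by (simp add: expansion_coeff_def)

lemma sum_expansion_coeff: "(\<Sum>j\<le>m. expansion_coeff m c j) = (real b - real c) ^ m"
  using binomial_ring[of 1 "real b - 1 - real c" m] by (simp add: expansion_coeff_def add.commute)

lemma sum_expansion_coeff_lessThan: "(\<Sum>j<m. expansion_coeff m c j) = (real b - real c) ^ m - 1"
  using sum_expansion_coeff[of m c] by (simp add: lessThan_Suc_atMost[symmetric] expansion_coeff_def)

lemma power_one_minus_str_point_Cons:
  "(1 - str_point b (c # X)) ^ m
     = (\<Sum>j\<le>m. expansion_coeff m c j * (1 - str_point b X) ^ j) / real b ^ m"
proof -
  have "(1 - str_point b (c # X)) ^ m = (real b - 1 - real c + (1 - str_point b X)) ^ m / real b ^ m"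
    by (simp add: one_minus_str_point_Cons[OF base_pos] power_divide)
  also have "(real b - 1 - real c + (1 - str_point b X)) ^ m
      = (\<Sum>j\<le>m. expansion_coeff m c j * (1 - str_point b X) ^ j)"
    by (subst add.commute, subst binomial_ring) (simp add: expansion_coeff_def mult_ac)
  finally show ?thesis .
qed

lemma layer_Suc:
  "layer k (Suc l) m
     = (\<Sum>c<b. \<Sum>j\<le>m. expansion_coeff m c j * on_tail (\<lambda>k. layer k l j) c k) / real b ^ (m + 1)"
proof -
  have inj: "inj_on (\<lambda>(c, X). c # X) ({..<b} \<times> strings_of_length b l)"
    by (auto simp: inj_on_def)
  have leading_digit: "(if occ d (c # X) = k then (1 - str_point b (c # X)) ^ m / real b ^ Suc l else 0)
      = (\<Sum>j\<le>m. expansion_coeff m c j *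
           (if occ d (c # X) = k then (1 - str_point b X) ^ j / real b ^ l else 0)) / real b ^ (m + 1)"
    for c X
    by (auto simp: power_one_minus_str_point_Cons sum_divide_distrib field_simps)
  have "layer k (Suc l) m = (\<Sum>c<b. \<Sum>X\<in>strings_of_length b l.
      if occ d (c # X) = k then (1 - str_point b (c # X)) ^ m / real b ^ Suc l else 0)"
    unfolding layer_def strings_of_length_Suc sum.reindex[OF inj] sum.cartesian_product
    by (auto simp: split_beta intro!: sum.cong)
  also have "\<dots> = (\<Sum>c<b. \<Sum>j\<le>m. expansion_coeff m c j * (\<Sum>X\<in>strings_of_length b l.
      if occ d (c # X) = k then (1 - str_point b X) ^ j / real b ^ l else 0)) / real b ^ (m + 1)"
    unfolding leading_digit by (simp add: sum_divide_distrib sum_distrib_left sum.swap[of _ "strings_of_length b l"])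
  finally show ?thesis
    unfolding sum_occ_Cons layer_def by simp
qed

lemma layer_Suc_moment_0:
  "layer k (Suc l) 0 = ((real b - 1) * layer k l 0 + (case k of 0 \<Rightarrow> 0 | Suc k' \<Rightarrow> layer k' l 0)) / real b"
  using layer_Suc[of k l 0] sum_on_tail[of "\<lambda>k. layer k l 0" k] by (simp add: expansion_coeff_def)

lemma summable_layer_moment_0: "summable (\<lambda>l. layer k l 0)"
proof (induction k)
  case 0
  show ?case
    by (rule summable_of_contracting_recurrence[where r = "(real b - 1) / real b" and t = "\<lambda>_. 0"])
       (use base_pos in \<open>auto simp: layer_nonneg layer_Suc_moment_0\<close>)
next
  case (Suc k)
  show ?case
    by (rule summable_of_contracting_recurrence[where r = "(real b - 1) / real b" and t = "\<lambda>l. layer k l 0 / real b"])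
       (use base_pos Suc in \<open>auto simp: layer_nonneg layer_Suc_moment_0 add_divide_distrib intro: summable_divide\<close>)
qed

lemma summable_layer: "summable (\<lambda>l. layer k l m)"
  by (rule summable_comparison_test'[OF summable_layer_moment_0[of k]])
     (use layer_le_layer_0 layer_nonneg in auto)

lemma v_eq_suminf_layer: "v b d k m = (\<Sum>l. layer k l m)"
proof -
  define F where "F x = indicator {0..<1::real} x * (1 - x) ^ m" for x
  define h where "h X = (if X \<in> digit_strings b \<and> occ d X = k
      then (1 - str_point b X) ^ m / real b ^ length X else 0)" for X
  have F_nonneg: "0 \<le> F x" for x
    by (auto simp: F_def indicator_def)
  have h_nonneg: "0 \<le> h X" for X
    using str_point_less_1[of X b] by (auto simp: h_def digit_strings_def)
  have "(\<integral>\<^sup>+x. ennreal (F x) \<partial>mu b d k) = (\<integral>\<^sup>+X. ennreal (h X) \<partial>count_space UNIV)"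
    unfolding mu_def
    by (simp add: F_def[abs_def] nn_integral_distr nn_integral_density, intro nn_integral_cong)
       (use str_point_nonneg str_point_less_1 in
         \<open>auto simp: h_def digit_strings_def str_point_def ennreal_mult'[symmetric] indicator_def\<close>)
  also have "\<dots> = (\<Sum>l. \<integral>\<^sup>+X. ennreal (h X) \<partial>count_space {X. length X = l})"
    by (rule nn_integral_count_space_lists_by_length)
  also have "\<dots> = (\<Sum>l. ennreal (layer k l m))"
  proof (rule suminf_cong)
    fix l
    have "(\<integral>\<^sup>+X. ennreal (h X) \<partial>count_space {X. length X = l}) = (\<Sum>X\<in>strings_of_length b l. ennreal (h X))"
      by (rule nn_integral_count_space'[OF finite_strings_of_length])
         (auto simp: h_def strings_of_length_def digit_strings_def)
    also have "\<dots> = ennreal (\<Sum>X\<in>strings_of_length b l. h X)"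
      by (rule sum_ennreal) (rule h_nonneg)
    also have "(\<Sum>X\<in>strings_of_length b l. h X) = layer k l m"
      unfolding layer_def by (rule sum.cong) (auto simp: h_def strings_of_length_def digit_strings_def)
    finally show "(\<integral>\<^sup>+X. ennreal (h X) \<partial>count_space {X. length X = l}) = ennreal (layer k l m)" .
  qed
  also have "\<dots> = ennreal (\<Sum>l. layer k l m)"
    by (rule suminf_ennreal2[OF layer_nonneg summable_layer])
  finally have "(\<integral>\<^sup>+x. ennreal (F x) \<partial>mu b d k) = ennreal (\<Sum>l. layer k l m)" .
  moreover have "v b d k m = enn2real (\<integral>\<^sup>+x. ennreal (F x) \<partial>mu b d k)"
    unfolding v_def set_lebesgue_integral_def F_def
    by (simp, rule integral_eq_nn_integral)
       (auto simp: F_def[abs_def] F_nonneg[unfolded F_def] mu_def)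
  ultimately show ?thesis
    using suminf_nonneg[OF summable_layer layer_nonneg] by simp
qed

lemma sums_layer: "(\<lambda>l. layer k l m) sums v b d k m"
  using summable_layer[THEN summable_sums] by (simp add: v_eq_suminf_layer)

lemma v_nonneg: "0 \<le> v b d k m"
  unfolding v_eq_suminf_layer by (rule suminf_nonneg[OF summable_layer layer_nonneg])

lemma v_le_v_moment_0: "v b d k m \<le> v b d k 0"
  unfolding v_eq_suminf_layer by (rule suminf_le[OF layer_le_layer_0 summable_layer summable_layer])

lemma v_less_v_moment_0:
  assumes "X \<in> strings_of_length b l" "occ d X = k" "0 < str_point b X" "1 \<le> m"
  shows "v b d k m < v b d k 0"
proof -
  have "0 < (\<Sum>l. layer k l 0 - layer k l m)"
    using layer_le_layer_0 layer_less_layer_0[OF assms]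
    by (intro suminf_pos2[where i = l] summable_diff summable_layer) auto
  also have "\<dots> = (\<Sum>l. layer k l 0) - (\<Sum>l. layer k l m)"
    by (rule suminf_diff[OF summable_layer summable_layer, symmetric])
  finally show ?thesis
    unfolding v_eq_suminf_layer by simp
qed

lemma v_expansion:
  "v b d k m = (if k = 0 then 1 else 0)
     + (\<Sum>c<b. \<Sum>j\<le>m. expansion_coeff m c j * on_tail (\<lambda>k. v b d k j) c k) / real b ^ (m + 1)"
proof -
  have tail_sums: "(\<lambda>l. on_tail (\<lambda>k. layer k l j) c k) sums on_tail (\<lambda>k. v b d k j) c k" for c j
    using sums_layer by (cases k) (auto simp: on_tail_def)
  have "(\<lambda>l. layer k (Suc l) m)
      sums ((\<Sum>c<b. \<Sum>j\<le>m. expansion_coeff m c j * on_tail (\<lambda>k. v b d k j) c k) / real b ^ (m + 1))"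
    unfolding layer_Suc by (intro sums_divide sums_sum sums_mult tail_sums)
  then have "(\<lambda>l. layer k l m)
      sums ((\<Sum>c<b. \<Sum>j\<le>m. expansion_coeff m c j * on_tail (\<lambda>k. v b d k j) c k) / real b ^ (m + 1)
            + layer k 0 m)"
    using sums_Suc_iff[of "\<lambda>l. layer k l m"] by blast
  then show ?thesis
    using sums_unique2[OF sums_layer] by (simp add: layer_0)
qed

definition lower_terms :: "nat \<Rightarrow> nat \<Rightarrow> real" where
  "lower_terms k m = (\<Sum>c<b. \<Sum>j<m. expansion_coeff m c j * on_tail (\<lambda>k. v b d k j) c k)"

lemma v_recurrence:
  "(real b ^ (m + 1) - real b + 1) * v b d k m
     = (if k = 0 then real b ^ (m + 1) else 0) + lower_terms k m + (case k of 0 \<Rightarrow> 0 | Suc k' \<Rightarrow> v b d k' m)"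
proof -
  define S where "S = (\<Sum>c<b. \<Sum>j\<le>m. expansion_coeff m c j * on_tail (\<lambda>k. v b d k j) c k)"
  have "S = lower_terms k m + (\<Sum>c<b. on_tail (\<lambda>k. v b d k m) c k)"
    unfolding S_def lower_terms_def
    by (simp add: lessThan_Suc_atMost[symmetric] sum.distrib expansion_coeff_def)
  then have S: "S = lower_terms k m + (real b - 1) * v b d k m + (case k of 0 \<Rightarrow> 0 | Suc k' \<Rightarrow> v b d k' m)"
    by (simp add: sum_on_tail)
  have "real b ^ (m + 1) * v b d k m = real b ^ (m + 1) * (if k = 0 then 1 else 0) + S"
    unfolding S_def using base_pos by (subst v_expansion) (simp add: distrib_left)
  then show ?thesis
    unfolding S by (cases k) (simp_all add: algebra_simps)
qed

lemma v_recurrence_0: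
  "(real b ^ (m + 1) - real b + 1) * v b d 0 m = real b ^ (m + 1) + lower_terms 0 m"
  using v_recurrence[of m 0] by simp

lemma v_recurrence_Suc:
  "(real b ^ (m + 1) - real b + 1) * v b d (Suc k) m = lower_terms (Suc k) m + v b d k m"
  using v_recurrence[of m "Suc k"] by simp

lemma recurrence_factor_pos: "0 < real b ^ (m + 1) - real b + 1"
proof -
  have "real b ^ 1 \<le> real b ^ (m + 1)"
    using base_pos by (intro power_increasing) auto
  then show ?thesis by simp
qed

section \<open>The zeroth moment and the upper bound\<close>

lemma v_moment_0: "v b d k 0 = real b"
proof (induction k)
  case 0
  show ?case using v_recurrence_0[of 0] by (simp add: lower_terms_def)
next
  case (Suc k)
  show ?case using v_recurrence_Suc[of 0 k] Suc by (simp add: lower_terms_def)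
qed

lemma v_le_base: "v b d k m \<le> real b"
  using v_le_v_moment_0 v_moment_0 by metis

section \<open>Strict decrease in the number of occurrences\<close>

lemma lower_terms_mono:
  assumes "\<And>c j. c < b \<Longrightarrow> j < m \<Longrightarrow> on_tail (\<lambda>k. v b d k j) c k' \<le> on_tail (\<lambda>k. v b d k j) c k"
  shows "lower_terms k' m \<le> lower_terms k m"
  unfolding lower_terms_def using assms
  by (intro sum_mono mult_left_mono expansion_coeff_nonneg) auto

lemma lower_terms_1_le:
  assumes "\<And>j. j < m \<Longrightarrow> v b d 1 j \<le> v b d 0 j"
  shows "lower_terms 1 m \<le> lower_terms 0 m + real b * ((real b - real d) ^ m - 1)"
proof -
  have "lower_terms 1 m - lower_terms 0 m = (\<Sum>c<b. \<Sum>j<m. expansion_coeff m c j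
      * (on_tail (\<lambda>k. v b d k j) c 1 - on_tail (\<lambda>k. v b d k j) c 0))"
    unfolding lower_terms_def by (simp add: sum_subtractf right_diff_distrib)
  also have "\<dots> \<le> (\<Sum>c<b. \<Sum>j<m. expansion_coeff m c j * (if c = d then real b else 0))"
    using assms v_le_base by (intro sum_mono mult_left_mono expansion_coeff_nonneg) (auto simp: on_tail_def)
  also have "\<dots> = (\<Sum>c<b. if c = d then real b * ((real b - real d) ^ m - 1) else 0)"
    by (intro sum.cong refl) (simp add: sum_distrib_right[symmetric] sum_expansion_coeff_lessThan mult.commute)
  also have "\<dots> = real b * ((real b - real d) ^ m - 1)"
    using digit_less_base by simp
  finally show ?thesis by simp
qed

lemma v_1_less_v_0:
  assumes "1 \<le> m" and lower: "\<And>j. j < m \<Longrightarrow> v b d 1 j \<le> v b d 0 j"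
  shows "v b d 1 m < v b d 0 m"
proof -
  have "(real b ^ (m + 1) - real b + 1) * (v b d 0 m - v b d 1 m)
      = real b ^ (m + 1) + lower_terms 0 m - lower_terms 1 m - v b d 0 m"
    using v_recurrence_0[of m] v_recurrence_Suc[of m 0] by (simp add: right_diff_distrib)
  moreover have "0 < real b ^ (m + 1) - real b * ((real b - real d) ^ m - 1) - v b d 0 m"
  proof (cases "d = 0")
    case True
    have one: "[1] \<in> strings_of_length b 1" "occ d [1] = 0" "0 < str_point b [1]"
      using True two_le_base by (auto simp: strings_of_length_def occ_def str_point_def str_value_def)
    have "v b d 0 m < v b d 0 0"
      by (rule v_less_v_moment_0[OF one assms(1)])
    then have "v b d 0 m < real b"
      by (simp only: v_moment_0)
    then show ?thesis
      using True by (simp add: algebra_simps)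
  next
    case False
    have "(b - d) ^ m < b ^ m"
      using False digit_less_base assms(1) by (intro power_strict_mono) auto
    then have "real ((b - d) ^ m) + 1 \<le> real (b ^ m)"
      by linarith
    then have "(real b - real d) ^ m + 1 \<le> real b ^ m"
      using digit_less_base by (simp add: of_nat_diff)
    then have "real b * ((real b - real d) ^ m - 1) \<le> real b * (real b ^ m - 2)"
      by (intro mult_left_mono) auto
    then show ?thesis
      using v_le_base[of 0 m] two_le_base by (simp add: algebra_simps)
  qed
  ultimately have "0 < (real b ^ (m + 1) - real b + 1) * (v b d 0 m - v b d 1 m)"
    using lower_terms_1_le[of m, OF lower] by linarith
  from zero_less_mult_pos[OF this recurrence_factor_pos] show ?thesis
    by simp
qed

lemma v_Suc_Suc_less:
  assumes "v b d (Suc k) m < v b d k m"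
    and "\<And>j. j < m \<Longrightarrow> v b d (Suc k) j \<le> v b d k j"
    and "\<And>j. j < m \<Longrightarrow> v b d (Suc (Suc k)) j \<le> v b d (Suc k) j"
  shows "v b d (Suc (Suc k)) m < v b d (Suc k) m"
proof -
  have "lower_terms (Suc (Suc k)) m \<le> lower_terms (Suc k) m"
    using assms(2,3) by (intro lower_terms_mono) (auto simp: on_tail_def)
  moreover have "(real b ^ (m + 1) - real b + 1) * (v b d (Suc k) m - v b d (Suc (Suc k)) m)
      = lower_terms (Suc k) m - lower_terms (Suc (Suc k)) m + (v b d k m - v b d (Suc k) m)"
    using v_recurrence_Suc[of m k] v_recurrence_Suc[of m "Suc k"] by (simp add: right_diff_distrib)
  ultimately have "0 < (real b ^ (m + 1) - real b + 1) * (v b d (Suc k) m - v b d (Suc (Suc k)) m)"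
    using assms(1) by linarith
  from zero_less_mult_pos[OF this recurrence_factor_pos] show ?thesis
    by simp
qed

lemma v_Suc_less:
  assumes "1 \<le> m"
  shows "v b d (Suc k) m < v b d k m"
  using assms
proof (induction m arbitrary: k rule: less_induct)
  case (less m)
  have lower: "v b d (Suc k) j \<le> v b d k j" if "j < m" for k j
  proof (cases "j = 0")
    case True
    then show ?thesis by (simp add: v_moment_0)
  next
    case False
    then show ?thesis using less.IH[OF that] by (simp add: less_imp_le)
  qed
  show ?case
  proof (induction k)
    case 0
    show ?case using v_1_less_v_0[OF less.prems] lower[where k = 0] by simp
  next
    case (Suc k)
    show ?case by (rule v_Suc_Suc_less[OF Suc lower lower])
  qed
qed

section \<open>The limit\<close>

lemma sum_lower_limits:
  "(\<Sum>c<b. \<Sum>j<m. expansion_coeff m c j * (real b / (real j + 1)))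
     = (real b ^ (m + 1) - real b) * (real b / (real m + 1))"
proof -
  have row: "(\<Sum>j<m. expansion_coeff m c j / (real j + 1))
      = ((real b - real c) ^ (m + 1) - (real b - real (Suc c)) ^ (m + 1) - 1) / (real m + 1)" for c
  proof -
    have "(\<Sum>j<m. expansion_coeff m c j / (real j + 1)) + 1 / (real m + 1)
        = (\<Sum>j\<le>m. expansion_coeff m c j / (real j + 1))"
      by (simp add: lessThan_Suc_atMost[symmetric] expansion_coeff_def)
    also have "\<dots> = ((real b - real c) ^ (m + 1) - (real b - real (Suc c)) ^ (m + 1)) / (real m + 1)"
      using sum_binomial_div_Suc[of m "real b - 1 - real c"] by (simp add: expansion_coeff_def diff_diff_eq)
    finally show ?thesis
      by (simp add: diff_divide_distrib)
  qed
  have "(\<Sum>c<b. (real b - real c) ^ (m + 1) - (real b - real (Suc c)) ^ (m + 1)) = real b ^ (m + 1)"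
    using sum_lessThan_telescope'[of "\<lambda>c. (real b - real c) ^ (m + 1)" b] by simp
  then have "(\<Sum>c<b. \<Sum>j<m. expansion_coeff m c j / (real j + 1)) = (real b ^ (m + 1) - real b) / (real m + 1)"
    unfolding row by (simp add: sum_divide_distrib[symmetric] sum_subtractf)
  moreover have "(\<Sum>c<b. \<Sum>j<m. expansion_coeff m c j * (real b / (real j + 1)))
      = real b * (\<Sum>c<b. \<Sum>j<m. expansion_coeff m c j / (real j + 1))"
    by (simp add: sum_distrib_left mult_ac)
  ultimately show ?thesis
    by simp
qed

lemma v_limit: "(\<lambda>k. v b d k m) \<longlonglongrightarrow> real b / (real m + 1)"
proof (induction m rule: less_induct)
  case (less m)
  show ?case
  proof (cases "m = 0")
    case True
    then show ?thesis by (simp add: v_moment_0)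
  next
    case False
    then have decreasing: "decseq (\<lambda>k. v b d k m)"
      using v_Suc_less by (intro decseq_SucI less_imp_le) simp
    obtain L where L: "(\<lambda>k. v b d k m) \<longlonglongrightarrow> L"
      by (rule decseq_convergent[OF decreasing, of 0]) (use v_nonneg in auto)
    define q where "q = real b ^ (m + 1) - real b + 1"
    define \<Lambda> where "\<Lambda> = (\<Sum>c<b. \<Sum>j<m. expansion_coeff m c j * (real b / (real j + 1)))"
    have tail_limit: "(\<lambda>k. on_tail (\<lambda>k. v b d k j) c (Suc k)) \<longlonglongrightarrow> real b / (real j + 1)"
      if "j < m" for c j
      using less.IH[OF that] LIMSEQ_Suc[OF less.IH[OF that]] by (cases "c = d") (simp_all add: on_tail_def)
    have "(\<lambda>k. lower_terms (Suc k) m) \<longlonglongrightarrow> \<Lambda>"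
      unfolding lower_terms_def \<Lambda>_def by (intro tendsto_sum tendsto_mult_left tail_limit) simp
    then have "(\<lambda>k. q * v b d (Suc k) m) \<longlonglongrightarrow> \<Lambda> + L"
      unfolding q_def v_recurrence_Suc by (intro tendsto_add L)
    moreover have "(\<lambda>k. q * v b d (Suc k) m) \<longlonglongrightarrow> q * L"
      by (intro tendsto_mult_left LIMSEQ_Suc[OF L])
    ultimately have "q * L = \<Lambda> + L"
      by (rule LIMSEQ_unique[rotated])
    moreover have "\<Lambda> = (q - 1) * (real b / (real m + 1))"
      unfolding \<Lambda>_def q_def sum_lower_limits by simp
    ultimately have "(q - 1) * L = (q - 1) * (real b / (real m + 1))"
      by (simp add: left_diff_distrib)
    moreover have "real b ^ 1 < real b ^ (m + 1)"
      using two_le_base False by (intro power_strict_increasing) auto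
    then have "q - 1 \<noteq> 0"
      unfolding q_def by (simp del: power_Suc)
    ultimately have "L = real b / (real m + 1)"
      using mult_left_cancel by blast
    with L show ?thesis by simp
  qed
qed

end

theorem mainTheorem17:
  fixes b d m :: nat
  assumes "b \<ge> 2" and "d < b" and "m \<ge> 1"
  shows "(\<forall>k. v b d k 0 = real b)
       \<and> (\<forall>k. v b d k m \<le> real b)
       \<and> (\<forall>k. v b d (Suc k) m < v b d k m)
       \<and> ((\<lambda>k. v b d k m) \<longlonglongrightarrow> real b / real (m + 1))"
proof -
  interpret digit_moments b d
    using assms(1,2) by unfold_locales
  show ?thesis
    using v_limit[of m] by (intro conjI allI v_moment_0 v_le_base v_Suc_less[OF assms(3)]) (simp add: add.commute)
qed

end
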